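(* Assume $\mathbb{E}\bigl(h(\theta)^2\bigr)<\infty$. Then for $f_S$-almost all $s^*\in\mathbb{R}^q$, $$\lim_{\delta\downarrow0} n\,\mathrm{Var}\bigl(Y^{(\delta)}_n\bigr)=\mathrm{Var}\bigl(h(\theta)\mid S=s^*\bigr),$$ uniformly in $n\in\mathbb{N}$.
   Context: Let $p,q\ge1$, $h\colon\mathbb{R}^p\to\mathbb{R}$ measurable. Let $(\theta,S)$ be a random vector in $\mathbb{R}^p\times\mathbb{R}^q$ with joint Lebesgue density $f_{S,\theta}(s,t)$, marginal $f_S(s)=\int f_{S,\theta}(s,t)\,dt$, and conditional density $f_{\theta|S}(t\mid s)=f_{S,\theta}(s,t)/f_S(s)$ if $f_S(s)>0$, $0$ otherwise; conditional expectations/variances given $S=s$ use this density. Fix a symmetric positive definite $q\times q$ matrix $A$ and let $\|s\|_A^2=s^\top A^{-1}s$. ABC algorithm: given $s^*$, $\delta>0$, $n\in\mathbb{N}$, repeatedly draw independent pairs $(\theta,S)$ from the joint distribution, accepting $\theta$ whenever $\|S-s^*\|_A\le\delta$, until $n$ values $\theta^{(\delta)}_1,\dots,\theta^{(\delta)}_n$ are accepted (i.i.d. with the law of $\theta$ given $\|S-s^*\|_A\le\delta$); $Y^{(\delta)}_n=\frac1n\sum_{j=1}^n h(\theta^{(\delta)}_j)$. *)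

theory Defs
  imports "HOL-Probability.Probability"
begin

definition var_of :: "'a measure \<Rightarrow> ('a \<Rightarrow> real) \<Rightarrow> real" where
  "var_of M X = (\<integral>x. (X x - (\<integral>y. X y \<partial>M))\<^sup>2 \<partial>M)"

definition A_norm :: "real^'q^'q \<Rightarrow> real^'q \<Rightarrow> real" where
  "A_norm A s = sqrt (s \<bullet> (matrix_inv A *v s))"

text \<open>Joint law of \<open>(\<theta>, S)\<close> given the joint density \<open>f_{S,\<theta>}(s,t)\<close>.\<close>
definition joint_law :: "(real^'q \<Rightarrow> real^'p \<Rightarrow> real) \<Rightarrow> ((real^'p) \<times> (real^'q)) measure" where
  "joint_law f = density lborel (\<lambda>(t, s). ennreal (f s t))"

definition marg_S :: "(real^'q \<Rightarrow> real^'p \<Rightarrow> real) \<Rightarrow> real^'q \<Rightarrow> real" where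
  "marg_S f s = (\<integral>t. f s t \<partial>lborel)"

definition cond_dens :: "(real^'q \<Rightarrow> real^'p \<Rightarrow> real) \<Rightarrow> real^'q \<Rightarrow> real^'p \<Rightarrow> real" where
  "cond_dens f s t = (if marg_S f s > 0 then f s t / marg_S f s else 0)"

definition cond_var :: "(real^'q \<Rightarrow> real^'p \<Rightarrow> real) \<Rightarrow> (real^'p \<Rightarrow> real) \<Rightarrow> real^'q \<Rightarrow> real" where
  "cond_var f h s = var_of (density lborel (\<lambda>t. ennreal (cond_dens f s t))) h"

text \<open>Law of one accepted ABC draw: law of \<theta> given \<parallel>S - s*\<parallel>_A \<le> \<delta>.\<close>
definition abc_accept_law ::
  "(real^'q \<Rightarrow> real^'p \<Rightarrow> real) \<Rightarrow> real^'q^'q \<Rightarrow> real^'q \<Rightarrow> real \<Rightarrow> (real^'p) measure" where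
  "abc_accept_law f A sstar \<delta> =
     distr (uniform_measure (joint_law f) {(t, s). A_norm A (s - sstar) \<le> \<delta>}) borel fst"

definition abc_var_Y ::
  "(real^'q \<Rightarrow> real^'p \<Rightarrow> real) \<Rightarrow> real^'q^'q \<Rightarrow> (real^'p \<Rightarrow> real) \<Rightarrow> real^'q \<Rightarrow> real \<Rightarrow> nat \<Rightarrow> real" where
  "abc_var_Y f A h sstar \<delta> n =
     var_of (PiM {..<n} (\<lambda>_. abc_accept_law f A sstar \<delta>))
            (\<lambda>\<omega>. (1 / real n) * (\<Sum>j<n. h (\<omega> j)))"

end

theory Submission
  imports Defs
begin

text \<open>For \<open>n \<ge> 1\<close> the accepted draws are i.i.d., so \<open>n \<cdot> Var(Y\<^sub>n)\<close> is the variance of \<open>h\<close> under the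
  acceptance law, whatever \<open>n\<close> is. Its first two moments are ratios \<open>\<integral>\<^sub>B g\<^sub>w / \<integral>\<^sub>B g\<^sub>1\<close> of integrals
  over the \<open>A\<close>-ball \<open>B\<close> of radius \<open>\<delta>\<close> around \<open>s*\<close> of the partial moments
  \<open>g\<^sub>w(s) = \<integral> f(s,t) w(t) dt\<close>, \<open>w \<in> {1, h, h\<^sup>2}\<close>. After dividing numerator and denominator by the
  volume of \<open>B\<close>, which is squeezed between two Euclidean balls of comparable radii, both converge
  at every Lebesgue point of \<open>g\<^sub>w\<close>, hence almost everywhere by the Lebesgue differentiation theorem,
  itself a consequence of the Vitali covering lemma. Where \<open>f\<^sub>S(s*) > 0\<close> the limit of the ratio is
  the conditional moment \<open>g\<^sub>w(s*) / f\<^sub>S(s*)\<close>.\<close>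

section \<open>Continuous functions are dense in \<open>L\<^sup>1\<close>\<close>

lemma nn_integral_abs_add_le:
  fixes a b :: "'a \<Rightarrow> real"
  assumes "a \<in> borel_measurable M" "b \<in> borel_measurable M"
  shows "(\<integral>\<^sup>+x. ennreal \<bar>a x + b x\<bar> \<partial>M) \<le> (\<integral>\<^sup>+x. ennreal \<bar>a x\<bar> \<partial>M) + (\<integral>\<^sup>+x. ennreal \<bar>b x\<bar> \<partial>M)"
proof -
  have "(\<integral>\<^sup>+x. ennreal \<bar>a x + b x\<bar> \<partial>M) \<le> (\<integral>\<^sup>+x. ennreal \<bar>a x\<bar> + ennreal \<bar>b x\<bar> \<partial>M)"
    by (intro nn_integral_mono) (simp add: ennreal_plus[symmetric] del: ennreal_plus)
  also have "\<dots> = (\<integral>\<^sup>+x. ennreal \<bar>a x\<bar> \<partial>M) + (\<integral>\<^sup>+x. ennreal \<bar>b x\<bar> \<partial>M)"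
    using assms by (intro nn_integral_add) auto
  finally show ?thesis .
qed

lemma L1_approx_continuous_indicator:
  fixes A :: "'a::euclidean_space set"
  assumes A: "A \<in> sets lborel" "emeasure lborel A < \<infinity>" and e: "e > 0"
  shows "\<exists>\<phi>. continuous_on UNIV \<phi> \<and> (\<integral>\<^sup>+x. ennreal \<bar>indicator A x - \<phi> x\<bar> \<partial>lborel) < ennreal e"
proof -
  have A_leb: "A \<in> sets lebesgue" using A by (simp add: sets_completionI_sets)
  obtain U where U: "open U" "A \<subseteq> U" "emeasure lebesgue (U - A) < ennreal (e/2)"
    using sets_lebesgue_outer_open[OF A_leb] e by (metis half_gt_zero)
  obtain T where T: "closed T" "T \<subseteq> A" "emeasure lebesgue (A - T) < ennreal (e/2)"
    using sets_lebesgue_inner_closed[OF A_leb] e by (metis half_gt_zero)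
  obtain \<phi> :: "'a \<Rightarrow> real" where \<phi>: "continuous_on UNIV \<phi>" "\<And>x. \<phi> x \<in> closed_segment 1 0"
     "\<And>x. x \<in> T \<Longrightarrow> \<phi> x = 1" "\<And>x. x \<in> -U \<Longrightarrow> \<phi> x = 0"
    by (rule Urysohn[OF T(1) _, of "-U"]) (use U T in auto)
  have \<phi>01: "0 \<le> \<phi> x \<and> \<phi> x \<le> 1" for x
    using \<phi>(2)[of x] by (auto simp: closed_segment_eq_real_ivl)
  have sets: "U - A \<in> sets lborel" "A - T \<in> sets lborel" "U - T \<in> sets lborel"
    using U T A by auto
  have "(\<integral>\<^sup>+x. ennreal \<bar>indicator A x - \<phi> x\<bar> \<partial>lborel) \<le> (\<integral>\<^sup>+x. indicator (U - T) x \<partial>lborel)"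
    using \<phi>01 \<phi>(3,4) T U by (intro nn_integral_mono) (auto simp: indicator_def)
  also have "\<dots> = emeasure lborel (U - T)" using sets by simp
  also have "\<dots> \<le> emeasure lborel ((U - A) \<union> (A - T))" by (intro emeasure_mono) (use sets in auto)
  also have "\<dots> \<le> emeasure lborel (U - A) + emeasure lborel (A - T)"
    using sets by (intro emeasure_subadditive) auto
  also have "\<dots> < ennreal (e/2) + ennreal (e/2)"
    using U(3) T(3) sets by (intro add_strict_mono) auto
  also have "\<dots> = ennreal e" using e by (simp flip: ennreal_plus)
  finally show ?thesis using \<phi>(1) by blast
qed

lemma L1_approx_continuous_scaled_indicator:
  fixes A :: "'a::euclidean_space set" and c :: real
  assumes A: "A \<in> sets lborel" "emeasure lborel A < \<infinity>" and \<eta>: "\<eta> > 0"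
  shows "\<exists>\<phi>. continuous_on UNIV \<phi> \<and> (\<integral>\<^sup>+x. ennreal \<bar>indicator A x *\<^sub>R c - \<phi> x\<bar> \<partial>lborel) < ennreal \<eta>"
proof -
  define e where "e = \<eta> / (\<bar>c\<bar> + 1)"
  have e: "e > 0" using \<eta> by (simp add: e_def)
  obtain \<phi> where \<phi>: "continuous_on UNIV \<phi>"
      "(\<integral>\<^sup>+x. ennreal \<bar>indicator A x - \<phi> x\<bar> \<partial>lborel) < ennreal e"
    using L1_approx_continuous_indicator[OF A e] by blast
  have [measurable]: "\<phi> \<in> borel_measurable lborel"
    using \<phi>(1) by (auto intro!: borel_measurable_continuous_onI)
  note A(1)[measurable]
  have "(\<integral>\<^sup>+x. ennreal \<bar>indicator A x *\<^sub>R c - c * \<phi> x\<bar> \<partial>lborel)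
      = (\<integral>\<^sup>+x. ennreal \<bar>c\<bar> * ennreal \<bar>indicator A x - \<phi> x\<bar> \<partial>lborel)"
    by (intro nn_integral_cong) (simp add: ennreal_mult[symmetric] abs_mult[symmetric] algebra_simps)
  also have "\<dots> = ennreal \<bar>c\<bar> * (\<integral>\<^sup>+x. ennreal \<bar>indicator A x - \<phi> x\<bar> \<partial>lborel)"
    by (intro nn_integral_cmult) measurable
  also have "\<dots> \<le> ennreal (\<bar>c\<bar> * e)"
    using \<phi>(2) e by (simp add: ennreal_mult mult_left_mono)
  also have "\<dots> < ennreal \<eta>"
    using \<eta> by (intro ennreal_lessI) (auto simp: e_def field_simps)
  finally show ?thesis using \<phi>(1)
    by (intro exI[of _ "\<lambda>x. c * \<phi> x"]) (auto intro: continuous_intros)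
qed

lemma L1_approx_continuous:
  fixes u :: "'a::euclidean_space \<Rightarrow> real"
  assumes "integrable lborel u" and "\<eta> > 0"
  shows "\<exists>\<phi>. continuous_on UNIV \<phi> \<and> (\<integral>\<^sup>+x. ennreal \<bar>u x - \<phi> x\<bar> \<partial>lborel) < ennreal \<eta>"
  using assms
proof (induction arbitrary: \<eta> rule: integrable_induct)
  case (base A c)
  then show ?case by (rule L1_approx_continuous_scaled_indicator)
next
  case (add f g)
  obtain \<phi> where \<phi>: "continuous_on UNIV \<phi>" "(\<integral>\<^sup>+x. ennreal \<bar>f x - \<phi> x\<bar> \<partial>lborel) < ennreal (\<eta>/2)"
    using add(3)[of "\<eta>/2"] add(5) by auto
  obtain \<psi> where \<psi>: "continuous_on UNIV \<psi>" "(\<integral>\<^sup>+x. ennreal \<bar>g x - \<psi> x\<bar> \<partial>lborel) < ennreal (\<eta>/2)"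
    using add(4)[of "\<eta>/2"] add(5) by auto
  have meas: "(\<lambda>x. f x - \<phi> x) \<in> borel_measurable lborel" "(\<lambda>x. g x - \<psi> x) \<in> borel_measurable lborel"
    using add(1,2) borel_measurable_continuous_onI[OF \<phi>(1)] borel_measurable_continuous_onI[OF \<psi>(1)]
    by auto
  have "(\<integral>\<^sup>+x. ennreal \<bar>(f x + g x) - (\<phi> x + \<psi> x)\<bar> \<partial>lborel)
      \<le> (\<integral>\<^sup>+x. ennreal \<bar>f x - \<phi> x\<bar> \<partial>lborel) + (\<integral>\<^sup>+x. ennreal \<bar>g x - \<psi> x\<bar> \<partial>lborel)"
    using nn_integral_abs_add_le[OF meas] by (simp add: algebra_simps)
  also have "\<dots> < ennreal (\<eta>/2) + ennreal (\<eta>/2)"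
    using \<phi>(2) \<psi>(2) by (rule add_strict_mono)
  also have "\<dots> = ennreal \<eta>" using add by (simp flip: ennreal_plus)
  finally show ?case using \<phi> \<psi>
    by (intro exI[of _ "\<lambda>x. \<phi> x + \<psi> x"]) (auto intro: continuous_intros)
next
  case (lim f s)
  have "(\<lambda>i. (\<integral>\<^sup>+x. norm (f x - s i x) \<partial>lborel)) \<longlonglongrightarrow> 0"
  proof (rule nn_integral_dominated_convergence_norm[where w="\<lambda>x. 2 * norm (f x)"])
    show "(\<integral>\<^sup>+x. ennreal (2 * norm (f x)) \<partial>lborel) < \<infinity>"
      using lim(4) by (auto simp: integrable_iff_bounded ennreal_mult nn_integral_cmult
           ennreal_mult_less_top)
  qed (use lim in auto)
  then have "\<forall>\<^sub>F i in sequentially. (\<integral>\<^sup>+x. norm (f x - s i x) \<partial>lborel) < ennreal (\<eta>/2)"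
    using lim(6) by (intro order_tendstoD) auto
  then obtain i where i: "(\<integral>\<^sup>+x. ennreal \<bar>f x - s i x\<bar> \<partial>lborel) < ennreal (\<eta>/2)"
    by (auto dest: eventually_happens)
  obtain \<phi> where \<phi>: "continuous_on UNIV \<phi>" "(\<integral>\<^sup>+x. ennreal \<bar>s i x - \<phi> x\<bar> \<partial>lborel) < ennreal (\<eta>/2)"
    using lim(5)[of "\<eta>/2" i] lim(6) by auto
  have meas: "(\<lambda>x. f x - s i x) \<in> borel_measurable lborel" "(\<lambda>x. s i x - \<phi> x) \<in> borel_measurable lborel"
    using lim(1,4) borel_measurable_continuous_onI[OF \<phi>(1)] by auto
  have "(\<integral>\<^sup>+x. ennreal \<bar>f x - \<phi> x\<bar> \<partial>lborel)
      \<le> (\<integral>\<^sup>+x. ennreal \<bar>f x - s i x\<bar> \<partial>lborel) + (\<integral>\<^sup>+x. ennreal \<bar>s i x - \<phi> x\<bar> \<partial>lborel)"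
    using nn_integral_abs_add_le[OF meas] by simp
  also have "\<dots> < ennreal (\<eta>/2) + ennreal (\<eta>/2)"
    using i \<phi>(2) by (rule add_strict_mono)
  also have "\<dots> = ennreal \<eta>" using lim by (simp flip: ennreal_plus)
  finally show ?case using \<phi>(1) by blast
qed

section \<open>The Lebesgue differentiation theorem\<close>

lemma null_subset_if_small_covers:
  assumes "\<And>e. e > 0 \<Longrightarrow> \<exists>W\<in>sets M. S \<subseteq> W \<and> emeasure M W \<le> ennreal e"
  shows "\<exists>Z\<in>null_sets M. S \<subseteq> Z"
proof -
  have "\<exists>W. W \<in> sets M \<and> S \<subseteq> W \<and> emeasure M W \<le> ennreal (1 / Suc j)" for j :: nat
    using assms[of "1 / Suc j"] by auto
  then obtain W where W: "\<And>j. W j \<in> sets M" "\<And>j. S \<subseteq> W j"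
      "\<And>j::nat. emeasure M (W j) \<le> ennreal (1 / Suc j)"
    by metis
  have "emeasure M (\<Inter>j. W j) \<le> 0 + ennreal e" if e: "e > 0" for e
  proof -
    obtain j where "1 / Suc j < e" using nat_approx_posE[OF e] by blast
    then have "emeasure M (W j) \<le> ennreal e" using W(3)[of j] by (meson ennreal_leI less_imp_le order_trans)
    moreover have "emeasure M (\<Inter>j. W j) \<le> emeasure M (W j)"
      using W(1) by (intro emeasure_mono) auto
    ultimately show ?thesis by simp
  qed
  then have "emeasure M (\<Inter>j. W j) = 0" by (meson ennreal_le_epsilon le_zero_eq)
  then show ?thesis using W(1,2) by (intro bexI[of _ "\<Inter>j. W j"]) auto
qed

lemma emeasure_UN_countable_le:
  assumes I: "countable I" and X: "\<And>i. i \<in> I \<Longrightarrow> X i \<in> sets M"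
  shows "emeasure M (\<Union>(X ` I)) \<le> (\<integral>\<^sup>+i. emeasure M (X i) \<partial>count_space I)"
proof -
  have "emeasure M (\<Union>(X ` I)) = (\<integral>\<^sup>+x. indicator (\<Union>(X ` I)) x \<partial>M)"
    by (rule nn_integral_indicator[symmetric], rule sets.countable_UN') (use I X in auto)
  also have "\<dots> \<le> (\<integral>\<^sup>+x. (\<integral>\<^sup>+i. indicator (X i) x \<partial>count_space I) \<partial>M)"
  proof (intro nn_integral_mono)
    fix x
    show "indicator (\<Union>(X ` I)) x \<le> (\<integral>\<^sup>+i. indicator (X i) x \<partial>count_space I)"
    proof (cases "x \<in> \<Union>(X ` I)")
      case True
      then obtain j where j: "j \<in> I" "x \<in> X j" by auto
      have "(1::ennreal) = (\<integral>\<^sup>+i. indicator (X i) x * indicator {j} i \<partial>count_space I)"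
        using j by (subst nn_integral_indicator_singleton) auto
      also have "\<dots> \<le> (\<integral>\<^sup>+i. indicator (X i) x \<partial>count_space I)"
        by (intro nn_integral_mono) (simp add: indicator_def)
      finally show ?thesis using True by simp
    qed simp
  qed
  also have "\<dots> = (\<integral>\<^sup>+i. emeasure M (X i) \<partial>count_space I)"
    using I X by (subst nn_integral_count_space_nn_integral) (auto intro!: nn_integral_cong)
  finally show ?thesis .
qed

lemma emeasure_cball_scale:
  fixes x :: "'a::euclidean_space"
  assumes "r \<ge> 0" "c \<ge> 0"
  shows "emeasure lborel (cball x (c * r)) = ennreal (c ^ DIM('a)) * emeasure lborel (cball x r)"
  using assms by (simp add: emeasure_cball power_mult_distrib ennreal_mult[symmetric] mult_ac)

text \<open>The set of centres need not be measurable, so it is covered by a Borel set instead.\<close>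

lemma Vitali_maximal_inequality:
  fixes v :: "'a::euclidean_space \<Rightarrow> ennreal"
  assumes v[measurable]: "v \<in> borel_measurable borel" and \<alpha>: "\<alpha> > 0"
  shows "\<exists>W\<in>sets borel.
      {x. \<exists>r. 0 < r \<and> r \<le> 1 \<and> ennreal \<alpha> * emeasure lborel (cball x r) < (\<integral>\<^sup>+y\<in>cball x r. v y \<partial>lborel)} \<subseteq> W
      \<and> emeasure lborel W \<le> ennreal (5 ^ DIM('a) / \<alpha>) * (\<integral>\<^sup>+y. v y \<partial>lborel)"
proof -
  define K where "K = {(x, r). 0 < r \<and> r \<le> 1 \<and>
      ennreal \<alpha> * emeasure lborel (cball x r) < (\<integral>\<^sup>+y\<in>cball x r. v y \<partial>lborel)}"
  define S where "S = fst ` K"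
  have S: "{x. \<exists>r. 0 < r \<and> r \<le> 1 \<and> ennreal \<alpha> * emeasure lborel (cball x r) < (\<integral>\<^sup>+y\<in>cball x r. v y \<partial>lborel)} = S"
    by (force simp: S_def K_def)
  have "S \<subseteq> (\<Union>i\<in>K. cball (fst i) (snd i))"
    by (force simp: S_def K_def)
  moreover have "\<And>i. i \<in> K \<Longrightarrow> 0 < snd i \<and> snd i \<le> 1" by (auto simp: K_def)
  ultimately obtain C where C: "countable C" "C \<subseteq> K"
     "pairwise (\<lambda>i j. disjnt (cball (fst i) (snd i)) (cball (fst j) (snd j))) C"
     "S \<subseteq> (\<Union>i\<in>C. cball (fst i) (5 * snd i))"
    by (rule Vitali_covering_lemma_cballs) blast
  define B where "B i = cball (fst i) (snd i)" for i :: "'a \<times> real"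
  have ball_bound: "ennreal (5 ^ DIM('a)) * emeasure lborel (B i)
      \<le> ennreal (5 ^ DIM('a) / \<alpha>) * (\<integral>\<^sup>+y\<in>B i. v y \<partial>lborel)" if "i \<in> C" for i
  proof -
    have "ennreal \<alpha> * emeasure lborel (B i) \<le> (\<integral>\<^sup>+y\<in>B i. v y \<partial>lborel)"
      using C(2) that by (auto simp: K_def B_def)
    then have "ennreal (1/\<alpha>) * (ennreal \<alpha> * emeasure lborel (B i)) \<le> ennreal (1/\<alpha>) * (\<integral>\<^sup>+y\<in>B i. v y \<partial>lborel)"
      by (rule mult_left_mono) simp
    then have "emeasure lborel (B i) \<le> ennreal (1/\<alpha>) * (\<integral>\<^sup>+y\<in>B i. v y \<partial>lborel)"
      using \<alpha> by (simp add: mult.assoc[symmetric] ennreal_mult[symmetric])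
    then show ?thesis
      using \<alpha> by (auto simp: mult.assoc[symmetric] ennreal_mult[symmetric] intro: mult_left_mono[THEN order_trans])
  qed
  define W where "W = (\<Union>i\<in>C. cball (fst i) (5 * snd i))"
  have "emeasure lborel W \<le> (\<integral>\<^sup>+i. emeasure lborel (cball (fst i) (5 * snd i)) \<partial>count_space C)"
    unfolding W_def using C(1) by (intro emeasure_UN_countable_le) auto
  also have "\<dots> = (\<integral>\<^sup>+i. ennreal (5 ^ DIM('a)) * emeasure lborel (B i) \<partial>count_space C)"
    using C(2) by (intro nn_integral_cong) (auto simp: B_def K_def emeasure_cball_scale)
  also have "\<dots> \<le> (\<integral>\<^sup>+i. ennreal (5 ^ DIM('a) / \<alpha>) * (\<integral>\<^sup>+y\<in>B i. v y \<partial>lborel) \<partial>count_space C)"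
    using ball_bound by (intro nn_integral_mono) auto
  also have "\<dots> = ennreal (5 ^ DIM('a) / \<alpha>) * (\<integral>\<^sup>+i. emeasure (density lborel v) (B i) \<partial>count_space C)"
    by (subst nn_integral_cmult) (auto simp: B_def emeasure_density intro!: arg_cong2[where f="(*)"] nn_integral_cong)
  also have "(\<integral>\<^sup>+i. emeasure (density lborel v) (B i) \<partial>count_space C) = emeasure (density lborel v) (\<Union>(B ` C))"
    using C(1,3) by (intro emeasure_UN_countable[symmetric])
      (auto simp: B_def disjoint_family_on_def pairwise_def disjnt_def)
  also have "\<dots> \<le> (\<integral>\<^sup>+y. v y \<partial>lborel)"
    using emeasure_mono[of "\<Union>(B ` C)" UNIV "density lborel v"] by (simp add: emeasure_density)
  finally have "emeasure lborel W \<le> ennreal (5 ^ DIM('a) / \<alpha>) * (\<integral>\<^sup>+y. v y \<partial>lborel)"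
    by (simp add: mult_left_mono)
  moreover have "W \<in> sets borel" unfolding W_def using C(1) by (intro sets.countable_UN') auto
  ultimately show ?thesis using C(4) unfolding S W_def by blast
qed

definition lebesgue_point :: "('a::euclidean_space \<Rightarrow> real) \<Rightarrow> 'a \<Rightarrow> bool" where
  "lebesgue_point u x \<longleftrightarrow> (\<forall>\<epsilon>>0. \<forall>\<^sub>F r in at_right 0.
     (\<integral>\<^sup>+y\<in>cball x r. ennreal \<bar>u y - u x\<bar> \<partial>lborel) \<le> ennreal \<epsilon> * emeasure lborel (cball x r))"

lemma oscillation_le_via_approximant:
  fixes u \<phi> :: "'a::euclidean_space \<Rightarrow> real"
  assumes [measurable]: "u \<in> borel_measurable borel" "\<phi> \<in> borel_measurable borel"
    and ux: "\<bar>u x - \<phi> x\<bar> \<le> \<beta>" and \<phi>x: "\<And>y. y \<in> cball x r \<Longrightarrow> \<bar>\<phi> y - \<phi> x\<bar> \<le> \<beta>"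
    and avg: "(\<integral>\<^sup>+y\<in>cball x r. ennreal \<bar>u y - \<phi> y\<bar> \<partial>lborel) \<le> ennreal \<beta> * emeasure lborel (cball x r)"
  shows "(\<integral>\<^sup>+y\<in>cball x r. ennreal \<bar>u y - u x\<bar> \<partial>lborel) \<le> ennreal (3 * \<beta>) * emeasure lborel (cball x r)"
proof -
  have \<beta>: "\<beta> \<ge> 0" using ux by linarith
  have cball[measurable]: "cball x r \<in> sets lborel" by simp
  have "(\<integral>\<^sup>+y\<in>cball x r. ennreal \<bar>u y - u x\<bar> \<partial>lborel)
      \<le> (\<integral>\<^sup>+y. ennreal \<bar>u y - \<phi> y\<bar> * indicator (cball x r) y + ennreal (2 * \<beta>) * indicator (cball x r) y \<partial>lborel)"
  proof (intro nn_integral_mono)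
    fix y
    have "\<bar>u y - u x\<bar> \<le> \<bar>u y - \<phi> y\<bar> + 2 * \<beta>" if "y \<in> cball x r"
      using \<phi>x[OF that] ux by linarith
    then show "ennreal \<bar>u y - u x\<bar> * indicator (cball x r) y
        \<le> ennreal \<bar>u y - \<phi> y\<bar> * indicator (cball x r) y + ennreal (2 * \<beta>) * indicator (cball x r) y"
      using \<beta> by (auto simp: indicator_def ennreal_plus[symmetric] simp del: ennreal_plus)
  qed
  also have "\<dots> = (\<integral>\<^sup>+y\<in>cball x r. ennreal \<bar>u y - \<phi> y\<bar> \<partial>lborel) + ennreal (2 * \<beta>) * emeasure lborel (cball x r)"
    by (subst nn_integral_add) (auto simp: nn_integral_cmult_indicator[OF cball])
  also have "\<dots> \<le> ennreal \<beta> * emeasure lborel (cball x r) + ennreal (2 * \<beta>) * emeasure lborel (cball x r)"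
    using avg by (rule add_right_mono)
  also have "\<dots> = ennreal (3 * \<beta>) * emeasure lborel (cball x r)"
    using \<beta> by (simp add: distrib_right[symmetric] ennreal_plus[symmetric] del: ennreal_plus)
  finally show ?thesis .
qed

lemma eventually_oscillation_le_via_approximant:
  fixes u \<phi> :: "'a::euclidean_space \<Rightarrow> real"
  assumes u: "u \<in> borel_measurable borel" and \<phi>: "continuous_on UNIV \<phi>"
    and \<beta>: "\<beta> > 0" and ux: "\<bar>u x - \<phi> x\<bar> \<le> \<beta>"
    and avg: "\<And>r. 0 < r \<Longrightarrow> r \<le> 1 \<Longrightarrow>
      (\<integral>\<^sup>+y\<in>cball x r. ennreal \<bar>u y - \<phi> y\<bar> \<partial>lborel) \<le> ennreal \<beta> * emeasure lborel (cball x r)"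
  shows "\<forall>\<^sub>F r in at_right 0.
    (\<integral>\<^sup>+y\<in>cball x r. ennreal \<bar>u y - u x\<bar> \<partial>lborel) \<le> ennreal (3 * \<beta>) * emeasure lborel (cball x r)"
proof -
  have "isCont \<phi> x" using \<phi> by (simp add: continuous_on_eq_continuous_at)
  then obtain d where d: "d > 0" "\<And>y. dist y x < d \<Longrightarrow> \<bar>\<phi> y - \<phi> x\<bar> < \<beta>"
    using \<beta> unfolding continuous_at_eps_delta dist_real_def by blast
  have "\<forall>\<^sub>F r in at_right 0. 0 < r \<and> r \<le> 1 \<and> r < d"
    using d(1) by (auto simp: eventually_at_right_field intro!: exI[of _ "min d 1"])
  then show ?thesis
  proof eventually_elim
    case (elim r)
    have "\<bar>\<phi> y - \<phi> x\<bar> \<le> \<beta>" if "y \<in> cball x r" for y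
      using d(2)[of y] that elim by (simp add: dist_commute)
    then show ?case
      using oscillation_le_via_approximant[OF u borel_measurable_continuous_onI[OF \<phi>] ux] avg elim
      by blast
  qed
qed

text \<open>Approximate \<open>u\<close> in \<open>L\<^sup>1\<close> by a continuous \<open>\<phi>\<close>: at points where \<open>u\<close> oscillates
  more than \<open>3\<beta>\<close> on arbitrarily small balls, either \<open>|u - \<phi>|\<close> exceeds \<open>\<beta>\<close> there (Markov) or its
  averages exceed \<open>\<beta>\<close> on some small ball (maximal inequality).\<close>

lemma oscillation_exceptional_set_small:
  fixes u :: "'a::euclidean_space \<Rightarrow> real"
  assumes u: "integrable lborel u" and \<beta>: "\<beta> > 0" and e: "e > 0"
  shows "\<exists>W\<in>sets borel. {x. \<not> (\<forall>\<^sub>F r in at_right 0.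
      (\<integral>\<^sup>+y\<in>cball x r. ennreal \<bar>u y - u x\<bar> \<partial>lborel) \<le> ennreal (3 * \<beta>) * emeasure lborel (cball x r))}
    \<subseteq> W \<and> emeasure lborel W \<le> ennreal e"
proof -
  define \<eta> where "\<eta> = e * \<beta> / (5 ^ DIM('a) + 1)"
  have pos: "(5::real) ^ DIM('a) + 1 > 0" by (simp add: add_pos_nonneg)
  then have \<eta>: "\<eta> > 0" unfolding \<eta>_def using e \<beta> by simp
  obtain \<phi> where \<phi>: "continuous_on UNIV \<phi>" "(\<integral>\<^sup>+x. ennreal \<bar>u x - \<phi> x\<bar> \<partial>lborel) < ennreal \<eta>"
    using L1_approx_continuous[OF u \<eta>] by blast
  have [measurable]: "\<phi> \<in> borel_measurable borel" "u \<in> borel_measurable borel"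
    using \<phi>(1) u by (auto intro: borel_measurable_continuous_onI)
  define v where "v x = ennreal \<bar>u x - \<phi> x\<bar>" for x
  have [measurable]: "v \<in> borel_measurable borel" unfolding v_def by measurable
  obtain W1 where W1: "W1 \<in> sets borel"
      "{x. \<exists>r. 0 < r \<and> r \<le> 1 \<and> ennreal \<beta> * emeasure lborel (cball x r) < (\<integral>\<^sup>+y\<in>cball x r. v y \<partial>lborel)} \<subseteq> W1"
      "emeasure lborel W1 \<le> ennreal (5 ^ DIM('a) / \<beta>) * (\<integral>\<^sup>+y. v y \<partial>lborel)"
    using Vitali_maximal_inequality[of v \<beta>] \<beta> by auto
  define W2 where "W2 = {x. \<beta> < \<bar>u x - \<phi> x\<bar>}"
  have W2: "W2 \<in> sets borel" unfolding W2_def by measurable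
  have "emeasure lborel W2 \<le> emeasure lborel {x\<in>UNIV. 1 \<le> ennreal (1 / \<beta>) * v x}"
    using \<beta> W2 by (intro emeasure_mono)
      (auto simp: v_def W2_def ennreal_mult[symmetric] field_simps ennreal_1[symmetric] simp del: ennreal_1)
  also have "\<dots> \<le> ennreal (1 / \<beta>) * (\<integral>\<^sup>+x. v x \<partial>lborel)"
    using nn_integral_Markov_inequality[of v UNIV lborel] by simp
  finally have mW2: "emeasure lborel W2 \<le> ennreal (1 / \<beta>) * (\<integral>\<^sup>+x. v x \<partial>lborel)" .
  have "x \<in> W1 \<union> W2" if "\<not> (\<forall>\<^sub>F r in at_right 0.
      (\<integral>\<^sup>+y\<in>cball x r. ennreal \<bar>u y - u x\<bar> \<partial>lborel) \<le> ennreal (3 * \<beta>) * emeasure lborel (cball x r))" for x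
    using eventually_oscillation_le_via_approximant[OF _ \<phi>(1) \<beta>, of u x] W1(2) that
    by (force simp: W2_def v_def not_less)
  moreover have "emeasure lborel (W1 \<union> W2) \<le> ennreal e"
  proof -
    have "emeasure lborel (W1 \<union> W2) \<le> emeasure lborel W1 + emeasure lborel W2"
      using W1(1) W2 by (intro emeasure_subadditive) auto
    also have "\<dots> \<le> ennreal ((5 ^ DIM('a) + 1) / \<beta>) * (\<integral>\<^sup>+y. v y \<partial>lborel)"
      using add_mono[OF W1(3) mW2] \<beta>
      by (simp add: distrib_right[symmetric] ennreal_plus[symmetric] add_divide_distrib del: ennreal_plus)
    also have "\<dots> \<le> ennreal ((5 ^ DIM('a) + 1) / \<beta>) * ennreal \<eta>"
      using \<phi>(2) by (intro mult_left_mono) (auto simp: v_def)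
    also have "\<dots> = ennreal e"
      using \<beta> e pos by (simp add: \<eta>_def ennreal_mult[symmetric])
    finally show ?thesis .
  qed
  ultimately show ?thesis using W1(1) W2 by (intro bexI[of _ "W1 \<union> W2"]) auto
qed

lemma AE_eventually_oscillation_le:
  fixes u :: "'a::euclidean_space \<Rightarrow> real"
  assumes u: "integrable lborel u" and \<epsilon>: "\<epsilon> > 0"
  shows "AE x in lborel. \<forall>\<^sub>F r in at_right 0.
     (\<integral>\<^sup>+y\<in>cball x r. ennreal \<bar>u y - u x\<bar> \<partial>lborel) \<le> ennreal \<epsilon> * emeasure lborel (cball x r)"
proof -
  have "\<exists>Z\<in>null_sets lborel. {x. \<not> (\<forall>\<^sub>F r in at_right 0.
      (\<integral>\<^sup>+y\<in>cball x r. ennreal \<bar>u y - u x\<bar> \<partial>lborel) \<le> ennreal (3 * (\<epsilon> / 3)) * emeasure lborel (cball x r))} \<subseteq> Z"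
  proof (rule null_subset_if_small_covers)
    fix e :: real assume "e > 0"
    then show "\<exists>W\<in>sets lborel. {x. \<not> (\<forall>\<^sub>F r in at_right 0.
        (\<integral>\<^sup>+y\<in>cball x r. ennreal \<bar>u y - u x\<bar> \<partial>lborel) \<le> ennreal (3 * (\<epsilon> / 3)) * emeasure lborel (cball x r))}
      \<subseteq> W \<and> emeasure lborel W \<le> ennreal e"
      using oscillation_exceptional_set_small[OF u, of "\<epsilon> / 3" e] \<epsilon> by simp
  qed
  then obtain Z where "Z \<in> null_sets lborel" "{x. \<not> (\<forall>\<^sub>F r in at_right 0.
      (\<integral>\<^sup>+y\<in>cball x r. ennreal \<bar>u y - u x\<bar> \<partial>lborel) \<le> ennreal \<epsilon> * emeasure lborel (cball x r))} \<subseteq> Z"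
    by auto
  then show ?thesis by (intro AE_I'[of Z]) auto
qed

theorem AE_lebesgue_point:
  fixes u :: "'a::euclidean_space \<Rightarrow> real"
  assumes u: "integrable lborel u"
  shows "AE x in lborel. lebesgue_point u x"
proof -
  have "AE x in lborel. \<forall>k::nat. \<forall>\<^sub>F r in at_right 0.
     (\<integral>\<^sup>+y\<in>cball x r. ennreal \<bar>u y - u x\<bar> \<partial>lborel) \<le> ennreal (1 / Suc k) * emeasure lborel (cball x r)"
    by (subst AE_all_countable) (auto intro: AE_eventually_oscillation_le[OF u])
  then show ?thesis
  proof eventually_elim
    case (elim x)
    show ?case unfolding lebesgue_point_def
    proof (intro allI impI)
      fix \<epsilon> :: real assume "\<epsilon> > 0"
      then obtain k where k: "1 / Suc k < \<epsilon>" using nat_approx_posE by blast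
      show "\<forall>\<^sub>F r in at_right 0.
          (\<integral>\<^sup>+y\<in>cball x r. ennreal \<bar>u y - u x\<bar> \<partial>lborel) \<le> ennreal \<epsilon> * emeasure lborel (cball x r)"
        using elim[rule_format, of k]
      proof eventually_elim
        case (elim r)
        have "ennreal (1 / Suc k) * emeasure lborel (cball x r) \<le> ennreal \<epsilon> * emeasure lborel (cball x r)"
          using k by (intro mult_right_mono ennreal_leI) auto
        with elim show ?case by (rule order_trans)
      qed
    qed
  qed
qed

lemma average_dist_le:
  fixes u :: "'a \<Rightarrow> real"
  assumes u: "integrable M u" and E: "E \<in> sets M" "emeasure M E < \<infinity>" "measure M E > 0"
    and e: "e \<ge> 0" and osc: "(\<integral>\<^sup>+y\<in>E. ennreal \<bar>u y - c\<bar> \<partial>M) \<le> ennreal (e * measure M E)"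
  shows "\<bar>(\<integral>y. indicator E y * u y \<partial>M) / measure M E - c\<bar> \<le> e"
proof -
  let ?m = "measure M E"
  have iu: "integrable M (\<lambda>y. indicator E y * u y)"
    using integrable_real_mult_indicator[OF E(1) u] by (simp add: mult.commute)
  have ic: "integrable M (\<lambda>y. indicator E y * c)"
    using E by (intro integrable_mult_left) (auto simp: less_top)
  have "(\<integral>y. indicator E y * u y \<partial>M) - c * ?m = (\<integral>y. indicator E y * (u y - c) \<partial>M)"
    using iu ic E by (simp add: right_diff_distrib mult.commute less_top)
  also have "\<bar>\<dots>\<bar> \<le> (\<integral>y. \<bar>indicator E y * (u y - c)\<bar> \<partial>M)"
    by (rule integral_abs_bound)
  also have "\<dots> \<le> e * ?m"
  proof -
    have "ennreal (\<integral>y. \<bar>indicator E y * (u y - c)\<bar> \<partial>M) = (\<integral>\<^sup>+y\<in>E. ennreal \<bar>u y - c\<bar> \<partial>M)"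
      using iu ic by (subst nn_integral_eq_integral[symmetric])
        (auto simp: right_diff_distrib intro!: nn_integral_cong split: split_indicator)
    with osc have "ennreal (\<integral>y. \<bar>indicator E y * (u y - c)\<bar> \<partial>M) \<le> ennreal (e * ?m)" by simp
    then show ?thesis using e E(3) by (subst (asm) ennreal_le_iff) auto
  qed
  finally show ?thesis using E(3) by (simp add: abs_le_iff field_simps)
qed

text \<open>A set squeezed between \<open>cball x a\<close> and \<open>cball x b\<close> fills at least the fraction \<open>(a/b)\<^sup>n\<close>
  of the outer ball, so an oscillation bound on the outer ball transfers to it.\<close>

lemma average_dist_le_squeezed:
  fixes u :: "'a::euclidean_space \<Rightarrow> real"
  assumes u: "integrable lborel u" and E: "E \<in> sets lborel" and a: "0 < a" "a \<le> b"
    and inner: "cball x a \<subseteq> E" and outer: "E \<subseteq> cball x b" and e: "e \<ge> 0"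
    and osc: "(\<integral>\<^sup>+y\<in>cball x b. ennreal \<bar>u y - u x\<bar> \<partial>lborel) \<le> ennreal e * emeasure lborel (cball x b)"
  shows "\<bar>(\<integral>y. indicator E y * u y \<partial>lborel) / measure lborel E - u x\<bar> \<le> (b / a) ^ DIM('a) * e"
proof -
  define K where "K = (b / a) ^ DIM('a)"
  have K: "K > 0" using a by (simp add: K_def)
  have "emeasure lborel E \<le> emeasure lborel (cball x b)"
    using outer by (intro emeasure_mono) auto
  then have fin: "emeasure lborel E < \<infinity>"
    using emeasure_lborel_cball_finite by (rule le_less_trans)
  have "0 < emeasure lborel (cball x a)"
    using a by (simp add: emeasure_cball)
  also have inner_le: "\<dots> \<le> ennreal (measure lborel E)"
    using E inner fin by (auto simp: emeasure_eq_ennreal_measure[symmetric] less_top intro!: emeasure_mono)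
  finally have mE: "0 < measure lborel E" by simp
  have "(\<integral>\<^sup>+y\<in>E. ennreal \<bar>u y - u x\<bar> \<partial>lborel) \<le> (\<integral>\<^sup>+y\<in>cball x b. ennreal \<bar>u y - u x\<bar> \<partial>lborel)"
    using outer by (intro nn_integral_mono) (auto split: split_indicator)
  also have "\<dots> \<le> ennreal e * emeasure lborel (cball x b)"
    by (rule osc)
  also have "emeasure lborel (cball x b) = ennreal K * emeasure lborel (cball x a)"
    using emeasure_cball_scale[of a "b / a" x] a by (simp add: K_def)
  also have "ennreal e * (ennreal K * emeasure lborel (cball x a)) = ennreal (K * e) * emeasure lborel (cball x a)"
    using K e by (simp add: mult.assoc[symmetric] ennreal_mult[symmetric] mult.commute[of e])
  also have "\<dots> \<le> ennreal (K * e) * ennreal (measure lborel E)"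
    using inner_le by (rule mult_left_mono) simp
  finally have "(\<integral>\<^sup>+y\<in>E. ennreal \<bar>u y - u x\<bar> \<partial>lborel) \<le> ennreal (K * e * measure lborel E)"
    using K e by (subst ennreal_mult) auto
  then show ?thesis using average_dist_le[OF u E fin mE, of "K * e" "u x"] K e by (simp add: K_def)
qed

lemma lebesgue_point_average_tendsto:
  fixes u :: "'a::euclidean_space \<Rightarrow> real" and E :: "real \<Rightarrow> 'a set"
  assumes u: "integrable lborel u" and lp: "lebesgue_point u x"
    and E: "\<And>r. E r \<in> sets lborel" and a: "a > 0"
    and inner: "\<And>r. r > 0 \<Longrightarrow> cball x (a * r) \<subseteq> E r"
    and outer: "\<And>r. r > 0 \<Longrightarrow> E r \<subseteq> cball x (b * r)"
  shows "((\<lambda>r. (\<integral>y. indicator (E r) y * u y \<partial>lborel) / measure lborel (E r)) \<longlongrightarrow> u x) (at_right 0)"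
proof (rule tendstoI)
  fix \<epsilon> :: real assume \<epsilon>: "\<epsilon> > 0"
  have "a \<le> b" using order_trans[OF inner outer, of 1] a by (simp add: cball_subset_cball_iff)
  define K where "K = (b / a) ^ DIM('a)"
  have K: "K > 0" using a \<open>a \<le> b\<close> by (simp add: K_def)
  have "\<forall>\<^sub>F \<rho> in at_right 0. (\<integral>\<^sup>+y\<in>cball x \<rho>. ennreal \<bar>u y - u x\<bar> \<partial>lborel)
      \<le> ennreal (\<epsilon> / (2 * K)) * emeasure lborel (cball x \<rho>)"
    using lp \<epsilon> K unfolding lebesgue_point_def by simp
  then obtain d where d: "d > 0" and osc: "\<And>\<rho>. 0 < \<rho> \<Longrightarrow> \<rho> < d \<Longrightarrow>
      (\<integral>\<^sup>+y\<in>cball x \<rho>. ennreal \<bar>u y - u x\<bar> \<partial>lborel) \<le> ennreal (\<epsilon> / (2 * K)) * emeasure lborel (cball x \<rho>)"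
    unfolding eventually_at_right_field by auto
  show "\<forall>\<^sub>F r in at_right 0. dist ((\<integral>y. indicator (E r) y * u y \<partial>lborel) / measure lborel (E r)) (u x) < \<epsilon>"
    unfolding eventually_at_right_field
  proof (intro exI[of _ "d / b"] conjI allI impI)
    show "0 < d / b" using d a \<open>a \<le> b\<close> by simp
    fix r :: real assume r: "0 < r" "r < d / b"
    then have "b * r < d" "0 < b * r" using a \<open>a \<le> b\<close> by (auto simp: field_simps)
    then have "\<bar>(\<integral>y. indicator (E r) y * u y \<partial>lborel) / measure lborel (E r) - u x\<bar>
        \<le> (b * r / (a * r)) ^ DIM('a) * (\<epsilon> / (2 * K))"
      using a \<open>a \<le> b\<close> r \<epsilon> K
      by (intro average_dist_le_squeezed[OF u E _ _ inner outer] osc) (auto intro: mult_right_mono)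
    also have "\<dots> = \<epsilon> / 2" using r K a \<open>a \<le> b\<close> by (simp add: K_def)
    finally show "dist ((\<integral>y. indicator (E r) y * u y \<partial>lborel) / measure lborel (E r)) (u x) < \<epsilon>"
      using \<epsilon> by (simp add: dist_real_def)
  qed
qed

section \<open>Norms given by positive definite matrices\<close>

lemma quadratic_form_lower_bound:
  fixes B :: "real^'n^'n"
  assumes pd: "\<And>v. v \<noteq> 0 \<Longrightarrow> v \<bullet> (B *v v) > 0"
  shows "\<exists>m>0. \<forall>v. m * (norm v)\<^sup>2 \<le> v \<bullet> (B *v v)"
proof -
  define Q where "Q v = v \<bullet> (B *v v)" for v :: "real^'n"
  have Q_scale: "Q (a *\<^sub>R v) = a\<^sup>2 * Q v" for a v
    by (simp add: Q_def matrix_vector_mult_scaleR power2_eq_square)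
  have cont: "continuous_on UNIV Q" unfolding Q_def by (intro continuous_intros)
  obtain b :: "real^'n" where "b \<in> Basis" using nonempty_Basis by blast
  then have "sphere (0::real^'n) 1 \<noteq> {}" by (auto intro!: exI[of _ b])
  then obtain v0 where v0: "v0 \<in> sphere 0 1" "\<And>y. y \<in> sphere 0 1 \<Longrightarrow> Q v0 \<le> Q y"
    using continuous_attains_inf[OF compact_sphere _ continuous_on_subset[OF cont]] by blast
  have "v0 \<noteq> 0" using v0(1) by auto
  then have "Q v0 > 0" using pd by (simp add: Q_def)
  moreover have "Q v0 * (norm v)\<^sup>2 \<le> Q v" for v
  proof (cases "v = 0")
    case False
    then have "Q v0 \<le> Q ((1 / norm v) *\<^sub>R v)" by (intro v0(2)) simp
    moreover have "Q v = (norm v)\<^sup>2 * Q ((1 / norm v) *\<^sub>R v)"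
      using False by (simp add: Q_scale power2_eq_square)
    ultimately show ?thesis by (metis mult.commute mult_left_mono zero_le_power2)
  qed (simp add: Q_def)
  ultimately show ?thesis unfolding Q_def by blast
qed

lemma quadratic_form_upper_bound:
  fixes B :: "real^'n^'n"
  shows "\<exists>K>0. \<forall>v. v \<bullet> (B *v v) \<le> K * (norm v)\<^sup>2"
proof -
  obtain K where K: "K > 0" "\<And>v. norm (B *v v) \<le> K * norm v"
    using linear_bounded_pos[OF matrix_vector_mul_linear] by blast
  have "v \<bullet> (B *v v) \<le> K * (norm v)\<^sup>2" for v
  proof -
    have "v \<bullet> (B *v v) \<le> norm v * norm (B *v v)" by (rule order_trans[OF abs_ge_self Cauchy_Schwarz_ineq2])
    also have "\<dots> \<le> norm v * (K * norm v)" using K(2) by (intro mult_left_mono) auto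
    finally show ?thesis by (simp add: power2_eq_square mult_ac)
  qed
  with K(1) show ?thesis by blast
qed

lemma pos_def_matrix_inv:
  fixes A :: "real^'n^'n"
  assumes pd: "\<And>v. v \<noteq> 0 \<Longrightarrow> v \<bullet> (A *v v) > 0" and v: "v \<noteq> 0"
  shows "v \<bullet> (matrix_inv A *v v) > 0"
proof -
  have "inj ((*v) A)"
  proof (rule injI)
    fix x y assume "A *v x = A *v y"
    then have "A *v (x - y) = 0" by (simp add: matrix_vector_mult_diff_distrib)
    then show "x = y" using pd[of "x - y"] by (cases "x - y = 0") auto
  qed
  then obtain B where "B ** A = mat 1" using matrix_left_invertible_injective by blast
  then have "\<exists>A'. A ** A' = mat 1 \<and> A' ** A = mat 1"
    using invertible_left_inverse by (auto simp: invertible_def)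
  then have "A ** matrix_inv A = mat 1"
    unfolding matrix_inv_def by (rule someI2_ex) auto
  then have inv: "A *v (matrix_inv A *v v) = v"
    by (simp add: matrix_vector_mul_assoc)
  define w where "w = matrix_inv A *v v"
  have "w \<noteq> 0" using inv v by (auto simp: w_def)
  then have "w \<bullet> (A *v w) > 0" by (rule pd)
  then show ?thesis using inv by (simp add: w_def inner_commute)
qed

lemma A_norm_equivalent:
  fixes A :: "real^'q^'q"
  assumes pd: "\<And>v. v \<noteq> 0 \<Longrightarrow> v \<bullet> (A *v v) > 0"
  shows "\<exists>c C. c > 0 \<and> (\<forall>v. c * norm v \<le> A_norm A v \<and> A_norm A v \<le> C * norm v)"
proof -
  obtain m where m: "m > 0" "\<And>v. m * (norm v)\<^sup>2 \<le> v \<bullet> (matrix_inv A *v v)"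
    using quadratic_form_lower_bound[of "matrix_inv A"] pos_def_matrix_inv[OF pd] by blast
  obtain K where K: "K > 0" "\<And>v. v \<bullet> (matrix_inv A *v v) \<le> K * (norm v)\<^sup>2"
    using quadratic_form_upper_bound by blast
  have "sqrt m * norm v \<le> A_norm A v" for v
    using real_sqrt_le_mono[OF m(2)[of v]] m(1) by (simp add: A_norm_def real_sqrt_mult)
  moreover have "A_norm A v \<le> sqrt K * norm v" for v
    using real_sqrt_le_mono[OF K(2)[of v]] K(1) by (simp add: A_norm_def real_sqrt_mult)
  moreover have "sqrt m > 0" using m(1) by simp
  ultimately show ?thesis by blast
qed

definition A_ball :: "real^'q^'q \<Rightarrow> real^'q \<Rightarrow> real \<Rightarrow> (real^'q) set" where
  "A_ball A c r = {s. A_norm A (s - c) \<le> r}"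

lemma A_ball_borel [measurable]: "A_ball A c r \<in> sets borel"
proof -
  have "continuous_on UNIV (\<lambda>v. v \<bullet> (matrix_inv A *v v))"
    by (intro continuous_intros)
  then have "continuous_on UNIV (\<lambda>s. (s - c) \<bullet> (matrix_inv A *v (s - c)))"
    by (rule continuous_on_compose2) (auto intro: continuous_intros)
  then have "continuous_on UNIV (\<lambda>s. A_norm A (s - c))"
    unfolding A_norm_def by (rule continuous_on_real_sqrt)
  then have "closed (A_ball A c r)"
    unfolding A_ball_def by (rule closed_Collect_le[OF _ continuous_on_const])
  then show ?thesis by simp
qed

lemma A_ball_between_cballs:
  fixes A :: "real^'q^'q"
  assumes pd: "\<And>v. v \<noteq> 0 \<Longrightarrow> v \<bullet> (A *v v) > 0"
  obtains a b where "a > 0" "\<And>r. cball c (a * r) \<subseteq> A_ball A c r" "\<And>r. A_ball A c r \<subseteq> cball c (b * r)"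
proof -
  obtain l L where l: "l > 0" and bounds: "\<And>v. l * norm v \<le> A_norm A v \<and> A_norm A v \<le> L * norm v"
    using A_norm_equivalent[OF pd] by blast
  have "l \<le> L" using bounds[of "axis undefined 1"] by (simp add: norm_axis_1)
  with l have L: "L > 0" by simp
  have "cball c (r / L) \<subseteq> A_ball A c r" for r
  proof
    fix s assume "s \<in> cball c (r / L)"
    then have "L * norm (s - c) \<le> r" using L by (simp add: dist_norm norm_minus_commute field_simps)
    then show "s \<in> A_ball A c r" using bounds[of "s - c"] by (simp add: A_ball_def)
  qed
  moreover have "A_ball A c r \<subseteq> cball c (r / l)" for r
  proof
    fix s assume "s \<in> A_ball A c r"
    then have "l * norm (s - c) \<le> r" using bounds[of "s - c"] by (simp add: A_ball_def)
    then show "s \<in> cball c (r / l)" using l by (simp add: dist_norm norm_minus_commute field_simps)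
  qed
  ultimately show ?thesis using that[of "1 / L" "1 / l"] L by simp
qed

section \<open>Sample means of i.i.d. draws\<close>

lemma prod_two_factors:
  assumes "finite I" "j \<in> I" "k \<in> I" "j \<noteq> k" "\<And>i. i \<in> I \<Longrightarrow> i \<noteq> j \<Longrightarrow> i \<noteq> k \<Longrightarrow> g i = 1"
  shows "(\<Prod>i\<in>I. g i) = g j * g k"
proof -
  have "(\<Prod>i\<in>I. g i) = (\<Prod>i\<in>{j, k}. g i)"
    using assms by (intro prod.mono_neutral_right) auto
  then show ?thesis using assms(4) by simp
qed

lemma PiM_component_integral:
  fixes P :: "'a measure" and g :: "'a \<Rightarrow> real" and n j :: nat
  assumes P: "prob_space P" and j: "j < n" and g: "g \<in> borel_measurable P"
  shows "integrable (PiM {..<n} (\<lambda>_. P)) (\<lambda>\<omega>. g (\<omega> j)) \<longleftrightarrow> integrable P g"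
    and "(\<integral>\<omega>. g (\<omega> j) \<partial>PiM {..<n} (\<lambda>_. P)) = (\<integral>x. g x \<partial>P)"
proof -
  have D: "distr (PiM {..<n} (\<lambda>_. P)) P (\<lambda>\<omega>. \<omega> j) = P"
    using distr_PiM_component[of "{..<n}" "\<lambda>_. P" j] P j by simp
  have m: "(\<lambda>\<omega>. \<omega> j) \<in> measurable (PiM {..<n} (\<lambda>_. P)) P"
    using j by (intro measurable_component_singleton) auto
  show "integrable (PiM {..<n} (\<lambda>_. P)) (\<lambda>\<omega>. g (\<omega> j)) \<longleftrightarrow> integrable P g"
    using integrable_distr_eq[OF m, of g] g D by simp
  show "(\<integral>\<omega>. g (\<omega> j) \<partial>PiM {..<n} (\<lambda>_. P)) = (\<integral>x. g x \<partial>P)"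
    using integral_distr[OF m, of g] g D by simp
qed

lemma PiM_integral_mult_components:
  fixes P :: "'a measure" and \<phi> :: "'a \<Rightarrow> real" and n j k :: nat
  assumes P: "prob_space P" and j: "j < n" and k: "k < n" and jk: "j \<noteq> k"
    and i1: "integrable P \<phi>"
  shows "integrable (PiM {..<n} (\<lambda>_. P)) (\<lambda>\<omega>. \<phi> (\<omega> j) * \<phi> (\<omega> k))"
    and "(\<integral>\<omega>. \<phi> (\<omega> j) * \<phi> (\<omega> k) \<partial>PiM {..<n} (\<lambda>_. P)) = (\<integral>x. \<phi> x \<partial>P) * (\<integral>x. \<phi> x \<partial>P)"
proof -
  interpret PP: product_prob_space "\<lambda>_::nat. P" "{..<n}"
    by (rule product_prob_spaceI) (rule P)
  interpret Pp: prob_space P by (rule P)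
  define f where "f i = (if i = j \<or> i = k then \<phi> else (\<lambda>_. 1))" for i
  have fi: "integrable P (f i)" for i using i1 by (simp add: f_def)
  have eq: "(\<Prod>i\<in>{..<n}. f i (\<omega> i)) = \<phi> (\<omega> j) * \<phi> (\<omega> k)" for \<omega> :: "nat \<Rightarrow> 'a"
    using prod_two_factors[of "{..<n}" j k "\<lambda>i. f i (\<omega> i)"] j k jk by (simp add: f_def)
  have eq2: "(\<Prod>i\<in>{..<n}. integral\<^sup>L P (f i)) = (\<integral>x. \<phi> x \<partial>P) * (\<integral>x. \<phi> x \<partial>P)"
    using prod_two_factors[of "{..<n}" j k "\<lambda>i. integral\<^sup>L P (f i)"] j k jk by (simp add: f_def prob_space.prob_space[OF P])
  show "integrable (PiM {..<n} (\<lambda>_. P)) (\<lambda>\<omega>. \<phi> (\<omega> j) * \<phi> (\<omega> k))"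
    using PP.product_integrable_prod[of "{..<n}" f] fi by (simp add: eq)
  show "(\<integral>\<omega>. \<phi> (\<omega> j) * \<phi> (\<omega> k) \<partial>PiM {..<n} (\<lambda>_. P)) = (\<integral>x. \<phi> x \<partial>P) * (\<integral>x. \<phi> x \<partial>P)"
    using PP.product_integral_prod[of "{..<n}" f] fi by (simp add: eq eq2)
qed

lemma PiM_integral_centered_components:
  fixes P :: "'a measure" and \<phi> :: "'a \<Rightarrow> real" and n j k :: nat
  assumes P: "prob_space P" and j: "j < n" and k: "k < n"
    and i1: "integrable P \<phi>" and i2: "integrable P (\<lambda>x. (\<phi> x)\<^sup>2)" and E: "(\<integral>x. \<phi> x \<partial>P) = 0"
  shows "integrable (PiM {..<n} (\<lambda>_. P)) (\<lambda>\<omega>. \<phi> (\<omega> j) * \<phi> (\<omega> k)) \<and>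
    (\<integral>\<omega>. \<phi> (\<omega> j) * \<phi> (\<omega> k) \<partial>PiM {..<n} (\<lambda>_. P)) = (if j = k then (\<integral>x. (\<phi> x)\<^sup>2 \<partial>P) else 0)"
proof (cases "j = k")
  case True
  then show ?thesis using PiM_component_integral[OF P j, of "\<lambda>x. (\<phi> x)\<^sup>2"] i2
    by (auto simp: power2_eq_square)
next
  case False
  then show ?thesis using PiM_integral_mult_components[OF P j k False i1] E by simp
qed

lemma var_of_sample_mean:
  fixes P :: "'a measure" and h :: "'a \<Rightarrow> real" and n :: nat
  assumes P: "prob_space P" and i1: "integrable P h" and i2: "integrable P (\<lambda>x. (h x)\<^sup>2)"
    and n: "n \<ge> 1"
  shows "real n * var_of (PiM {..<n} (\<lambda>_. P)) (\<lambda>\<omega>. 1 / real n * (\<Sum>j<n. h (\<omega> j))) = var_of P h"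
proof -
  interpret P: prob_space P by (rule P)
  define M where "M = PiM {..<n} (\<lambda>_. P)"
  define \<mu> where "\<mu> = (\<integral>x. h x \<partial>P)"
  define \<phi> where "\<phi> x = h x - \<mu>" for x
  define Y where "Y \<omega> = 1 / real n * (\<Sum>j<n. h (\<omega> j))" for \<omega> :: "nat \<Rightarrow> 'a"
  have i\<phi>: "integrable P \<phi>" unfolding \<phi>_def using i1 by auto
  have "(\<lambda>x. (\<phi> x)\<^sup>2) = (\<lambda>x. (h x)\<^sup>2 - 2 * \<mu> * h x + \<mu>\<^sup>2)"
    by (auto simp: \<phi>_def power2_eq_square algebra_simps)
  then have i\<phi>2: "integrable P (\<lambda>x. (\<phi> x)\<^sup>2)" using i1 i2 by auto
  have E\<phi>: "(\<integral>x. \<phi> x \<partial>P) = 0"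
    using i1 by (simp add: \<phi>_def \<mu>_def P.prob_space)
  have cov: "integrable M (\<lambda>\<omega>. \<phi> (\<omega> j) * \<phi> (\<omega> k))"
      "(\<integral>\<omega>. \<phi> (\<omega> j) * \<phi> (\<omega> k) \<partial>M) = (if j = k then (\<integral>x. (\<phi> x)\<^sup>2 \<partial>P) else 0)"
    if "j < n" "k < n" for j k
    using PiM_integral_centered_components[OF P that i\<phi> i\<phi>2 E\<phi>] by (simp_all add: M_def)
  have EY: "(\<integral>\<omega>. Y \<omega> \<partial>M) = \<mu>"
    using PiM_component_integral[OF P, of _ n h] i1 n
    by (simp add: Y_def M_def \<mu>_def Bochner_Integration.integral_sum)
  have Yc: "Y \<omega> - \<mu> = 1 / real n * (\<Sum>j<n. \<phi> (\<omega> j))" for \<omega>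
    using n by (simp add: Y_def \<phi>_def sum_subtractf field_simps)
  have "var_of M Y = (\<integral>\<omega>. (1 / real n)\<^sup>2 * (\<Sum>j<n. \<Sum>k<n. \<phi> (\<omega> j) * \<phi> (\<omega> k)) \<partial>M)"
    unfolding var_of_def EY Yc
    by (intro Bochner_Integration.integral_cong refl) (simp add: power_mult_distrib power2_eq_square sum_product)
  also have "\<dots> = (1 / real n)\<^sup>2 * (\<Sum>j<n. \<Sum>k<n. (\<integral>\<omega>. \<phi> (\<omega> j) * \<phi> (\<omega> k) \<partial>M))"
  proof -
    have "(\<integral>\<omega>. (\<Sum>j<n. \<Sum>k<n. \<phi> (\<omega> j) * \<phi> (\<omega> k)) \<partial>M) = (\<Sum>j<n. \<integral>\<omega>. (\<Sum>k<n. \<phi> (\<omega> j) * \<phi> (\<omega> k)) \<partial>M)"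
      using cov(1) by (intro Bochner_Integration.integral_sum Bochner_Integration.integrable_sum) auto
    also have "\<dots> = (\<Sum>j<n. \<Sum>k<n. (\<integral>\<omega>. \<phi> (\<omega> j) * \<phi> (\<omega> k) \<partial>M))"
      using cov(1) by (intro sum.cong refl Bochner_Integration.integral_sum) auto
    finally show ?thesis by simp
  qed
  also have "\<dots> = (1 / real n)\<^sup>2 * (real n * (\<integral>x. (\<phi> x)\<^sup>2 \<partial>P))"
    using cov(2) by (simp add: sum.delta)
  finally show ?thesis
    using n by (simp add: M_def Y_def[abs_def] var_of_def \<phi>_def \<mu>_def power2_eq_square)
qed

section \<open>The ABC acceptance law\<close>

lemma borel_measurable_fst_prod:
  "fst \<in> borel_measurable (borel :: ('a::euclidean_space \<times> 'b::euclidean_space) measure)"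
  by (intro borel_measurable_continuous_onI continuous_intros)

lemma borel_measurable_snd_prod:
  "snd \<in> borel_measurable (borel :: ('a::euclidean_space \<times> 'b::euclidean_space) measure)"
  by (intro borel_measurable_continuous_onI continuous_intros)

lemma vimage_snd_A_ball_borel:
  "snd -` A_ball A c \<delta> \<in> sets (borel :: ('a::euclidean_space \<times> (real^'q)) measure)"
  by (rule measurable_sets_borel[OF borel_measurable_snd_prod A_ball_borel])

lemma uniform_measure_fst_integral:
  fixes M :: "('a::euclidean_space \<times> 'b::euclidean_space) measure" and w :: "'a \<Rightarrow> real"
  assumes sM: "sets M = sets borel" and D: "D \<in> sets borel" and pos: "0 < measure M D"
    and fin: "emeasure M D < \<infinity>"
    and w: "w \<in> borel_measurable borel" and iw: "integrable M (\<lambda>x. w (fst x))"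
  shows "integrable (distr (uniform_measure M D) borel fst) w"
    and "(\<integral>y. w y \<partial>distr (uniform_measure M D) borel fst) = (\<integral>x. indicator D x * w (fst x) \<partial>M) / measure M D"
proof -
  define Z where "Z = measure M D"
  have eZ: "emeasure M D = ennreal Z" using fin by (simp add: Z_def emeasure_eq_ennreal_measure less_top)
  have Z: "Z > 0" using pos by (simp add: Z_def)
  have DM: "D \<in> sets M" using D sM by simp
  have fst_M: "fst \<in> measurable M borel"
    by (subst measurable_cong_sets[OF sM refl]) (rule borel_measurable_fst_prod)
  have U: "uniform_measure M D = density M (\<lambda>x. ennreal (indicator D x / Z))"
  proof -
    have "(\<lambda>x. indicator D x / ennreal Z) = (\<lambda>x. ennreal (indicator D x / Z))"
      using Z divide_ennreal[of 1 Z] by (auto simp: fun_eq_iff indicator_def)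
    then show ?thesis unfolding uniform_measure_def eZ by simp
  qed
  have dens: "(\<lambda>x. indicator D x / Z :: real) \<in> borel_measurable M" using DM by measurable
  have wfst: "(\<lambda>x. w (fst x)) \<in> borel_measurable M" using measurable_compose[OF fst_M w] .
  have fst_U: "fst \<in> measurable (uniform_measure M D) borel" using fst_M by simp
  have "integrable M (\<lambda>x. (indicator D x / Z) *\<^sub>R w (fst x))"
    using integrable_mult_right[OF integrable_real_mult_indicator[OF DM iw], of "1/Z"] by (simp add: mult_ac)
  then have "integrable (uniform_measure M D) (\<lambda>x. w (fst x))"
    unfolding U using dens wfst Z by (subst integrable_density) auto
  then show "integrable (distr (uniform_measure M D) borel fst) w"
    using integrable_distr_eq[OF fst_U w] by simp
  have "(\<integral>y. w y \<partial>distr (uniform_measure M D) borel fst) = (\<integral>x. w (fst x) \<partial>uniform_measure M D)"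
    by (rule integral_distr[OF fst_U w])
  also have "\<dots> = (\<integral>x. (indicator D x / Z) *\<^sub>R w (fst x) \<partial>M)"
    unfolding U using dens wfst Z by (subst integral_density) auto
  also have "\<dots> = (\<integral>x. indicator D x * w (fst x) \<partial>M) / Z"
    by (simp add: mult_ac)
  finally show "(\<integral>y. w y \<partial>distr (uniform_measure M D) borel fst) = (\<integral>x. indicator D x * w (fst x) \<partial>M) / measure M D"
    by (simp add: Z_def)
qed

lemma tendsto_divide_common_denominator:
  fixes p q m :: "'a \<Rightarrow> real"
  assumes p: "((\<lambda>x. p x / m x) \<longlongrightarrow> P) F" and q: "((\<lambda>x. q x / m x) \<longlongrightarrow> Q) F" and "Q \<noteq> 0"
  shows "((\<lambda>x. p x / q x) \<longlongrightarrow> P / Q) F"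
proof -
  have "((\<lambda>x. (p x / m x) / (q x / m x)) \<longlongrightarrow> P / Q) F"
    using p q \<open>Q \<noteq> 0\<close> by (rule tendsto_divide)
  moreover have "\<forall>\<^sub>F x in F. q x / m x \<noteq> 0"
    using q \<open>Q \<noteq> 0\<close> by (rule tendsto_imp_eventually_ne)
  then have "\<forall>\<^sub>F x in F. (p x / m x) / (q x / m x) = p x / q x"
    by eventually_elim simp
  ultimately show ?thesis by (rule Lim_transform_eventually)
qed

lemma uniform_limit_eventually_const:
  assumes g: "(g \<longlongrightarrow> l) F" and f: "\<forall>\<^sub>F x in F. \<forall>n\<in>S. f x n = g x"
  shows "uniform_limit S f (\<lambda>_. l) F"
  unfolding uniform_limit_iff
proof (intro allI impI)
  fix e :: real assume "e > 0"
  with g have "\<forall>\<^sub>F x in F. dist (g x) l < e" by (rule tendstoD)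
  with f show "\<forall>\<^sub>F x in F. \<forall>n\<in>S. dist (f x n) l < e" by eventually_elim auto
qed

definition marg_moment :: "(real^'q \<Rightarrow> real^'p \<Rightarrow> real) \<Rightarrow> (real^'p \<Rightarrow> real) \<Rightarrow> real^'q \<Rightarrow> real" where
  "marg_moment f w s = (\<integral>t. f s t * w t \<partial>lborel)"

lemma marg_moment_one [simp]: "marg_moment f (\<lambda>_. 1) = marg_S f"
  by (simp add: fun_eq_iff marg_moment_def marg_S_def)

text \<open>By Fubini, \<open>accept_moment f A c w \<delta>\<close> is \<open>E[w(\<theta>); \<parallel>S - c\<parallel>\<^sub>A \<le> \<delta>]\<close>.\<close>

definition accept_moment ::
  "(real^'q \<Rightarrow> real^'p \<Rightarrow> real) \<Rightarrow> real^'q^'q \<Rightarrow> real^'q \<Rightarrow> (real^'p \<Rightarrow> real) \<Rightarrow> real \<Rightarrow> real" where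
  "accept_moment f A c w \<delta> = (\<integral>s. indicator (A_ball A c \<delta>) s * marg_moment f w s \<partial>lborel)"

definition variance_weights :: "('a \<Rightarrow> real) \<Rightarrow> ('a \<Rightarrow> real) set" where
  "variance_weights h = {\<lambda>_. 1, h, \<lambda>t. (h t)\<^sup>2}"

lemma cond_var_eq_moments:
  fixes f :: "real^'q \<Rightarrow> real^'p \<Rightarrow> real"
  assumes f_nonneg: "\<And>s t. f s t \<ge> 0" and h: "h \<in> borel_measurable borel"
    and pos: "marg_S f c > 0"
    and i0: "integrable lborel (\<lambda>t. f c t)" and i1: "integrable lborel (\<lambda>t. f c t * h t)"
    and i2: "integrable lborel (\<lambda>t. f c t * (h t)\<^sup>2)"
  shows "cond_var f h c = marg_moment f (\<lambda>t. (h t)\<^sup>2) c / marg_S f c - (marg_moment f h c / marg_S f c)\<^sup>2"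
proof -
  define G where "G = marg_S f c"
  define Q where "Q = density lborel (\<lambda>t. ennreal (f c t / G))"
  have Q: "density lborel (\<lambda>t. ennreal (cond_dens f c t)) = Q"
    using pos by (simp add: Q_def G_def cond_dens_def)
  have [measurable]: "(\<lambda>t. f c t) \<in> borel_measurable borel" "(\<lambda>t. (h t)\<^sup>2) \<in> borel_measurable borel"
    using i0 h by auto
  have dens: "(\<lambda>t. f c t / G) \<in> borel_measurable lborel" "AE t in lborel. 0 \<le> f c t / G"
    using f_nonneg pos by (auto simp: G_def)
  have "emeasure Q (space Q) = ennreal (\<integral>t. f c t / G \<partial>lborel)"
    unfolding Q_def using i0 dens by (simp add: emeasure_density nn_integral_eq_integral)
  then interpret Q: prob_space Q
    using pos by (intro prob_spaceI) (simp add: G_def marg_S_def)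
  have moment: "integrable Q w \<and> (\<integral>t. w t \<partial>Q) = marg_moment f w c / G"
    if "w \<in> borel_measurable borel" "integrable lborel (\<lambda>t. f c t * w t)" for w
    using that unfolding Q_def
    by (simp add: integrable_density integral_density dens marg_moment_def mult.commute[of _ "w _"])
  show ?thesis
    unfolding cond_var_def Q var_of_def
    using Q.variance_eq[of h] moment[OF h i1] moment[of "\<lambda>t. (h t)\<^sup>2"] i2 by (simp add: G_def)
qed

locale joint_density =
  fixes f :: "real^'q \<Rightarrow> real^'p \<Rightarrow> real"
  assumes f_meas: "(\<lambda>(t, s). f s t) \<in> borel_measurable (borel :: ((real^'p) \<times> (real^'q)) measure)"
    and f_nonneg: "\<And>s t. f s t \<ge> 0"
    and f_total: "(\<integral>\<^sup>+x. ennreal ((\<lambda>(t, s). f s t) x) \<partial>(lborel :: ((real^'p) \<times> (real^'q)) measure)) = 1"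
begin

lemma joint_law_eq: "joint_law f = density lborel (\<lambda>x. ennreal ((\<lambda>(t, s). f s t) x))"
  unfolding joint_law_def by (intro arg_cong[where f="density lborel"]) (auto simp: fun_eq_iff)

lemma sets_joint_law: "sets (joint_law f) = sets borel"
  by (simp add: joint_law_def)

lemma prob_space_joint_law: "prob_space (joint_law f)"
proof (rule prob_spaceI)
  have "(\<lambda>x. ennreal ((\<lambda>(t, s). f s t) x)) \<in> borel_measurable (lborel :: ((real^'p) \<times> (real^'q)) measure)"
    using f_meas by measurable
  then show "emeasure (joint_law f) (space (joint_law f)) = 1"
    using f_total by (simp add: joint_law_eq emeasure_density)
qed

lemma joint_law_fubini:
  fixes w :: "real^'p \<Rightarrow> real"
  assumes w: "w \<in> borel_measurable borel" and iw: "integrable (joint_law f) (\<lambda>x. w (fst x))"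
  shows "integrable lborel (marg_moment f w)"
    and "AE s in lborel. integrable lborel (\<lambda>t. f s t * w t)"
    and "E \<in> sets borel \<Longrightarrow>
         (\<integral>x. indicator E (snd x) * w (fst x) \<partial>joint_law f) = (\<integral>s. indicator E s * marg_moment f w s \<partial>lborel)"
proof -
  define F where "F = (\<lambda>(t, s). f s t)"
  have [measurable]: "F \<in> borel_measurable borel" using f_meas by (simp add: F_def)
  note w[measurable]
  have [measurable]: "(\<lambda>x. w (fst x)) \<in> borel_measurable (borel :: ((real^'p) \<times> (real^'q)) measure)"
    by (rule measurable_compose[OF borel_measurable_fst_prod w])
  have F_nonneg: "F x \<ge> 0" for x by (simp add: F_def f_nonneg split: prod.split)
  have int_lborel: "integrable lborel (\<lambda>x. F x * w (fst x))"
    using iw unfolding joint_law_eq F_def[symmetric] by (subst (asm) integrable_density) (auto simp: F_nonneg)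
  then have i2: "integrable (lborel \<Otimes>\<^sub>M lborel) (\<lambda>(t, s). f s t * w t)"
    by (simp add: lborel_prod F_def case_prod_beta')
  show "integrable lborel (marg_moment f w)"
    using lborel_pair.integrable_snd[OF i2] by (simp add: marg_moment_def[abs_def])
  show "AE s in lborel. integrable lborel (\<lambda>t. f s t * w t)"
    using lborel_pair.AE_integrable_snd[OF i2] by simp
  assume E[measurable]: "E \<in> sets borel"
  have [measurable]: "(\<lambda>x. indicator E (snd x) :: real) \<in> borel_measurable (borel :: ((real^'p) \<times> (real^'q)) measure)"
    by (rule measurable_compose[OF borel_measurable_snd_prod borel_measurable_indicator[OF E]])
  have "integrable lborel (\<lambda>x. indicator E (snd x) * (F x * w (fst x)))"
    using int_lborel by (rule Bochner_Integration.integrable_bound) (measurable, auto simp: indicator_def)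
  then have i3: "integrable (lborel \<Otimes>\<^sub>M lborel) (\<lambda>(t, s). indicator E s * (f s t * w t))"
    by (simp add: lborel_prod F_def case_prod_beta')
  have "(\<integral>x. indicator E (snd x) * w (fst x) \<partial>joint_law f) = (\<integral>x. F x * (indicator E (snd x) * w (fst x)) \<partial>lborel)"
    unfolding joint_law_eq F_def[symmetric] by (subst integral_density) (auto simp: F_nonneg)
  also have "\<dots> = (\<integral>x. (\<lambda>(t, s). indicator E s * (f s t * w t)) x \<partial>(lborel \<Otimes>\<^sub>M lborel))"
    by (simp add: lborel_prod F_def case_prod_beta' mult_ac)
  also have "\<dots> = (\<integral>s. indicator E s * marg_moment f w s \<partial>lborel)"
    using lborel_pair.integral_snd[OF i3] by (simp add: marg_moment_def)
  finally show "(\<integral>x. indicator E (snd x) * w (fst x) \<partial>joint_law f) = (\<integral>s. indicator E s * marg_moment f w s \<partial>lborel)" .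
qed

lemma variance_weights_integrable:
  assumes h: "h \<in> borel_measurable borel" and h2: "integrable (joint_law f) (\<lambda>x. (h (fst x))\<^sup>2)"
    and w: "w \<in> variance_weights h"
  shows "w \<in> borel_measurable borel" and "integrable (joint_law f) (\<lambda>x. w (fst x))"
proof -
  interpret J: prob_space "joint_law f" by (rule prob_space_joint_law)
  have "(\<lambda>x. h (fst x)) \<in> borel_measurable (joint_law f)"
    unfolding measurable_cong_sets[OF sets_joint_law refl]
    by (rule measurable_compose[OF borel_measurable_fst_prod h])
  then have "integrable (joint_law f) (\<lambda>x. h (fst x))"
    using h2 by (rule J.square_integrable_imp_integrable)
  then show "integrable (joint_law f) (\<lambda>x. w (fst x))" and "w \<in> borel_measurable borel"
    using w h2 h by (auto simp: variance_weights_def)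
qed

lemma AE_variance_weights_regular:
  assumes h: "h \<in> borel_measurable borel" and h2: "integrable (joint_law f) (\<lambda>x. (h (fst x))\<^sup>2)"
  shows "AE c in lborel. \<forall>w\<in>variance_weights h.
           lebesgue_point (marg_moment f w) c \<and> integrable lborel (\<lambda>t. f c t * w t)"
proof (rule AE_finite_allI)
  fix w assume "w \<in> variance_weights h"
  note w = variance_weights_integrable[OF h h2 this]
  show "AE c in lborel. lebesgue_point (marg_moment f w) c \<and> integrable lborel (\<lambda>t. f c t * w t)"
    using AE_lebesgue_point[OF joint_law_fubini(1)[OF w]] joint_law_fubini(2)[OF w] by eventually_elim simp
qed (simp add: variance_weights_def)

lemma abc_accept_law_moment:
  fixes w :: "real^'p \<Rightarrow> real"
  assumes w: "w \<in> borel_measurable borel" and iw: "integrable (joint_law f) (\<lambda>x. w (fst x))"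
    and pos: "0 < accept_moment f A c (\<lambda>_. 1) \<delta>"
  shows "prob_space (abc_accept_law f A c \<delta>)"
    and "integrable (abc_accept_law f A c \<delta>) w"
    and "(\<integral>t. w t \<partial>abc_accept_law f A c \<delta>) = accept_moment f A c w \<delta> / accept_moment f A c (\<lambda>_. 1) \<delta>"
proof -
  interpret J: prob_space "joint_law f" by (rule prob_space_joint_law)
  define D :: "((real^'p) \<times> (real^'q)) set" where "D = snd -` A_ball A c \<delta>"
  have law: "abc_accept_law f A c \<delta> = distr (uniform_measure (joint_law f) D) borel fst"
    unfolding abc_accept_law_def by (rule arg_cong[where f="\<lambda>D. distr (uniform_measure _ D) borel fst"])
      (auto simp: D_def A_ball_def)
  have D: "D \<in> sets borel"
    unfolding D_def by (rule vimage_snd_A_ball_borel)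
  have moment: "(\<integral>x. indicator D x * v (fst x) \<partial>joint_law f) = accept_moment f A c v \<delta>"
    if "v \<in> borel_measurable borel" "integrable (joint_law f) (\<lambda>x. v (fst x))" for v :: "real^'p \<Rightarrow> real"
    using joint_law_fubini(3)[OF that A_ball_borel] by (simp add: accept_moment_def D_def indicator_def)
  have D': "D \<in> sets (joint_law f)" "emeasure (joint_law f) D < \<infinity>"
    using D by (auto simp: sets_joint_law J.emeasure_eq_measure)
  have "measure (joint_law f) D = (\<integral>x. indicator D x * (\<lambda>_. 1::real) (fst x) \<partial>joint_law f)"
    using D'(1) by (simp add: J.emeasure_eq_measure)
  also have "\<dots> = accept_moment f A c (\<lambda>_. 1) \<delta>"
    by (rule moment) simp_all
  finally have mass: "measure (joint_law f) D = accept_moment f A c (\<lambda>_. 1) \<delta>" .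
  then have pos': "0 < measure (joint_law f) D" using pos by simp
  show "prob_space (abc_accept_law f A c \<delta>)"
  proof -
    have "fst \<in> borel_measurable (joint_law f)"
      using borel_measurable_fst_prod by (simp add: measurable_cong_sets[OF sets_joint_law refl])
    then show ?thesis
      unfolding law using pos' D' by (intro prob_space.prob_space_distr prob_space_uniform_measure)
        (auto simp: J.emeasure_eq_measure)
  qed
  note F = uniform_measure_fst_integral[OF sets_joint_law D pos' D'(2) w iw]
  show "integrable (abc_accept_law f A c \<delta>) w" unfolding law by (rule F(1))
  show "(\<integral>t. w t \<partial>abc_accept_law f A c \<delta>) = accept_moment f A c w \<delta> / accept_moment f A c (\<lambda>_. 1) \<delta>"
    unfolding law F(2) moment[OF w iw] using mass by simp
qed

lemma accept_moment_average_tendsto: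
  assumes w: "w \<in> borel_measurable borel" and iw: "integrable (joint_law f) (\<lambda>x. w (fst x))"
    and pd: "\<And>v. v \<noteq> 0 \<Longrightarrow> v \<bullet> (A *v v) > 0" and lp: "lebesgue_point (marg_moment f w) c"
  shows "((\<lambda>\<delta>. accept_moment f A c w \<delta> / measure lborel (A_ball A c \<delta>)) \<longlongrightarrow> marg_moment f w c) (at_right 0)"
proof -
  obtain a b where "a > 0" "\<And>r. cball c (a * r) \<subseteq> A_ball A c r" "\<And>r. A_ball A c r \<subseteq> cball c (b * r)"
    using A_ball_between_cballs[OF pd, of c] by blast
  then show ?thesis
    unfolding accept_moment_def
    by (intro lebesgue_point_average_tendsto[OF joint_law_fubini(1)[OF w iw] lp]) auto
qed

lemma abc_var_uniform_limit:
  assumes h: "h \<in> borel_measurable borel" and h2: "integrable (joint_law f) (\<lambda>x. (h (fst x))\<^sup>2)"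
    and pd: "\<And>v. v \<noteq> 0 \<Longrightarrow> v \<bullet> (A *v v) > 0" and pos: "marg_S f c > 0"
    and reg: "\<forall>w\<in>variance_weights h. lebesgue_point (marg_moment f w) c \<and> integrable lborel (\<lambda>t. f c t * w t)"
  shows "uniform_limit {1..} (\<lambda>\<delta> n. real n * abc_var_Y f A h c \<delta> n) (\<lambda>n. cond_var f h c) (at_right 0)"
proof -
  let ?a = "accept_moment f A c" and ?m = "\<lambda>\<delta>. measure lborel (A_ball A c \<delta>)"
  note weight = variance_weights_integrable[OF h h2]
  have avg: "((\<lambda>\<delta>. ?a w \<delta> / ?m \<delta>) \<longlongrightarrow> marg_moment f w c) (at_right 0)" if "w \<in> variance_weights h" for w
    using accept_moment_average_tendsto[OF weight[OF that] pd] reg that by blast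
  have w1: "(\<lambda>_. 1) \<in> variance_weights h" and wh: "h \<in> variance_weights h"
    and wh2: "(\<lambda>t. (h t)\<^sup>2) \<in> variance_weights h"
    by (auto simp: variance_weights_def)
  have "\<forall>\<^sub>F \<delta> in at_right 0. 0 < ?a (\<lambda>_. 1) \<delta> / ?m \<delta>"
    using avg[OF w1] pos by (intro order_tendstoD) auto
  then have ev: "\<forall>\<^sub>F \<delta> in at_right 0. 0 < ?a (\<lambda>_. 1) \<delta>"
    by eventually_elim (auto simp: zero_less_divide_iff)
  have cv: "cond_var f h c = marg_moment f (\<lambda>t. (h t)\<^sup>2) c / marg_S f c - (marg_moment f h c / marg_S f c)\<^sup>2"
    using reg w1 wh wh2 by (intro cond_var_eq_moments[OF f_nonneg h pos]) auto
  show ?thesis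
  proof (rule uniform_limit_eventually_const)
    show "((\<lambda>\<delta>. ?a (\<lambda>t. (h t)\<^sup>2) \<delta> / ?a (\<lambda>_. 1) \<delta> - (?a h \<delta> / ?a (\<lambda>_. 1) \<delta>)\<^sup>2) \<longlongrightarrow> cond_var f h c) (at_right 0)"
      unfolding cv using avg[OF w1] avg[OF wh] avg[OF wh2] pos
      by (intro tendsto_intros tendsto_divide_common_denominator) auto
    show "\<forall>\<^sub>F \<delta> in at_right 0. \<forall>n\<in>{1..}.
        real n * abc_var_Y f A h c \<delta> n = ?a (\<lambda>t. (h t)\<^sup>2) \<delta> / ?a (\<lambda>_. 1) \<delta> - (?a h \<delta> / ?a (\<lambda>_. 1) \<delta>)\<^sup>2"
      using ev
    proof eventually_elim
      case (elim \<delta>)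
      note M1 = abc_accept_law_moment[OF weight[OF wh] elim]
      note M2 = abc_accept_law_moment[OF weight[OF wh2] elim]
      interpret P: prob_space "abc_accept_law f A c \<delta>" by (rule M1(1))
      have "var_of (abc_accept_law f A c \<delta>) h = ?a (\<lambda>t. (h t)\<^sup>2) \<delta> / ?a (\<lambda>_. 1) \<delta> - (?a h \<delta> / ?a (\<lambda>_. 1) \<delta>)\<^sup>2"
        unfolding var_of_def using P.variance_eq[of h] M1 M2 by simp
      then show ?case
        unfolding abc_var_Y_def using var_of_sample_mean[OF M1(1) M1(2) M2(2)] by simp
    qed
  qed
qed

end

theorem corollary1:
  fixes f :: "real^'q \<Rightarrow> real^'p \<Rightarrow> real"
    and h :: "real^'p \<Rightarrow> real"
    and A :: "real^'q^'q"
  assumes f_meas: "(\<lambda>(t, s). f s t) \<in> borel_measurable (borel :: ((real^'p) \<times> (real^'q)) measure)"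
    and f_nonneg: "\<And>s t. f s t \<ge> 0"
    and f_total: "(\<integral>\<^sup>+ x. ennreal ((\<lambda>(t, s). f s t) x) \<partial>(lborel :: ((real^'p) \<times> (real^'q)) measure)) = 1"
    and h_meas: "h \<in> borel_measurable borel"
    and A_sym: "transpose A = A"
    and A_pd: "\<And>x. x \<noteq> 0 \<Longrightarrow> x \<bullet> (A *v x) > 0"
    and h_sq: "integrable (joint_law f) (\<lambda>(t, s). (h t)\<^sup>2)"
  shows "AE sstar in density lborel (\<lambda>s. ennreal (marg_S f s)).
           uniform_limit {1..}
             (\<lambda>\<delta> n. real n * abc_var_Y f A h sstar \<delta> n)
             (\<lambda>n. cond_var f h sstar)
             (at_right 0)"
proof -
  interpret joint_density f using f_meas f_nonneg f_total by unfold_locales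
  have h2: "integrable (joint_law f) (\<lambda>x. (h (fst x))\<^sup>2)" using h_sq by (simp add: case_prod_beta')
  interpret J: prob_space "joint_law f" by (rule prob_space_joint_law)
  have "integrable lborel (marg_S f)"
    using joint_law_fubini(1)[OF measurable_const J.integrable_const, of 1] by simp
  then have meas: "(\<lambda>s. ennreal (marg_S f s)) \<in> borel_measurable lborel" by measurable
  show ?thesis
    unfolding AE_density[OF meas] using AE_variance_weights_regular[OF h_meas h2]
    by eventually_elim (rule impI, rule abc_var_uniform_limit[OF h_meas h2 A_pd], auto)
qed

end
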